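(* Let $\Gamma=\langle V,(w_u)_{u\in V},\alpha,\beta\rangle$ be a celebrity game with $\beta>1$, $n=|V|$, $W=\sum_{u\in V}w_u$ and $w_{\max}=\max_u w_u$. The following are equivalent: (1) $\Gamma$ is a star celebrity game; (2) either $\alpha<w_{\max}$, or $\alpha\ge w_{\max}$ and there is at most one $u\in V$ with $\alpha>W-w_u$; (3) a star graph $S_n$ on $V$ (a tree with one vertex adjacent to all others) is a Nash equilibrium graph of $\Gamma$.
   Context: A celebrity game $\Gamma=\langle V,(w_u)_{u\in V},\alpha,\beta\rangle$ consists of a set of players $V=\{1,\dots,n\}$, celebrity weights $w_u>0$, a link cost $\alpha>0$ and a critical distance $\beta$ with $1\le\beta\le n-1$. A strategy of player $u$ is a set $S_u\subseteq V\setminus\{u\}$; a strategy profile is $S=(S_1,\dots,S_n)$; its outcome graph $G[S]$ is the undirected graph on $V$ with edge set $\{\{u,v\}: u\in S_v\text{ or }v\in S_u\}$. With $d_G$ the graph distance (infinite between different connected components), the cost of player $u$ is $c_u(S)=\alpha|S_u|+\sum_{v:\,d_{G[S]}(u,v)>\beta}w_v$. $S$ is a Nash equilibrium if no player can strictly decrease its cost by changing only its own strategy; a graph $G$ is a Nash equilibrium graph of $\Gamma$ if $G=G[S]$ for some Nash equilibrium $S$. $\Gamma$ is a star celebrity game if it has a Nash equilibrium graph that is connected. *)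

theory Defs
  imports Complex_Main
begin

definition players :: "nat \<Rightarrow> nat set" where
  "players n = {1..n}"

definition strategy_profile :: "nat \<Rightarrow> (nat \<Rightarrow> nat set) \<Rightarrow> bool" where
  "strategy_profile n S \<longleftrightarrow> (\<forall>u\<in>players n. S u \<subseteq> players n - {u})"

definition outcome_graph :: "nat \<Rightarrow> (nat \<Rightarrow> nat set) \<Rightarrow> nat \<Rightarrow> nat \<Rightarrow> bool" where
  "outcome_graph n S u v \<longleftrightarrow>
     u \<in> players n \<and> v \<in> players n \<and> (u \<in> S v \<or> v \<in> S u)"

fun within_dist :: "(nat \<Rightarrow> nat \<Rightarrow> bool) \<Rightarrow> nat \<Rightarrow> nat \<Rightarrow> nat \<Rightarrow> bool" where
  "within_dist G 0 u v \<longleftrightarrow> u = v"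
| "within_dist G (Suc k) u v \<longleftrightarrow> within_dist G k u v \<or> (\<exists>x. within_dist G k u x \<and> G x v)"

definition player_cost ::
  "nat \<Rightarrow> (nat \<Rightarrow> real) \<Rightarrow> real \<Rightarrow> nat \<Rightarrow> (nat \<Rightarrow> nat set) \<Rightarrow> nat \<Rightarrow> real" where
  "player_cost n w \<alpha> \<beta> S u =
     \<alpha> * real (card (S u)) +
     (\<Sum>v\<in>{v \<in> players n. \<not> within_dist (outcome_graph n S) \<beta> u v}. w v)"

definition nash_equilibrium ::
  "nat \<Rightarrow> (nat \<Rightarrow> real) \<Rightarrow> real \<Rightarrow> nat \<Rightarrow> (nat \<Rightarrow> nat set) \<Rightarrow> bool" where
  "nash_equilibrium n w \<alpha> \<beta> S \<longleftrightarrow>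
     strategy_profile n S \<and>
     (\<forall>u\<in>players n. \<forall>S'. S' \<subseteq> players n - {u} \<longrightarrow>
        player_cost n w \<alpha> \<beta> S u \<le> player_cost n w \<alpha> \<beta> (S(u := S')) u)"

definition ne_graph ::
  "nat \<Rightarrow> (nat \<Rightarrow> real) \<Rightarrow> real \<Rightarrow> nat \<Rightarrow> (nat \<Rightarrow> nat \<Rightarrow> bool) \<Rightarrow> bool" where
  "ne_graph n w \<alpha> \<beta> G \<longleftrightarrow> (\<exists>S. nash_equilibrium n w \<alpha> \<beta> S \<and> G = outcome_graph n S)"

definition connected_graph :: "nat \<Rightarrow> (nat \<Rightarrow> nat \<Rightarrow> bool) \<Rightarrow> bool" where
  "connected_graph n G \<longleftrightarrow> (\<forall>u\<in>players n. \<forall>v\<in>players n. G\<^sup>*\<^sup>* u v)"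

definition star_celebrity_game :: "nat \<Rightarrow> (nat \<Rightarrow> real) \<Rightarrow> real \<Rightarrow> nat \<Rightarrow> bool" where
  "star_celebrity_game n w \<alpha> \<beta> \<longleftrightarrow> (\<exists>G. ne_graph n w \<alpha> \<beta> G \<and> connected_graph n G)"

definition star_graph :: "nat \<Rightarrow> nat \<Rightarrow> nat \<Rightarrow> nat \<Rightarrow> bool" where
  "star_graph n c u v \<longleftrightarrow>
     u \<in> players n \<and> v \<in> players n \<and> u \<noteq> v \<and> (u = c \<or> v = c)"

end

theory Submission
  imports Defs
begin

text \<open>If every leaf v of a star has \<open>\<alpha> \<le> W - w v\<close>, the star is an equilibrium for \<open>\<beta> \<ge> 2\<close>:
  everybody already sees everybody, the centre buys nothing, and a leaf can only save its
  single link \<open>\<alpha>\<close> by dropping it, which costs it \<open>W - w v\<close>. Conversely, in any equilibrium a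
  player x buys at most \<open>(W - w x) / \<alpha>\<close> links, since buying nothing costs at most \<open>W - w x\<close>.
  If \<open>\<alpha>\<close> is at least every weight and two players u have \<open>W - w u < \<alpha>\<close>, these two buy nothing
  and everybody buys at most one link. Following the bought links from any vertex then leads to
  a unique player who buys nothing, and this player is constant along edges, so the two
  non-buyers lie in different components.\<close>

lemma finite_players [simp]: "finite (players n)"
  by (simp add: players_def)

lemma within_dist_refl: "within_dist G k u u"
  by (induction k) auto

lemma within_dist_mono: "within_dist G k u v \<Longrightarrow> k \<le> k' \<Longrightarrow> within_dist G k' u v"
proof (induction k')
  case (Suc k')
  then show ?case by (cases "k = Suc k'") auto
qed simp

lemma within_dist_isolated: "(\<And>y. \<not> G u y) \<Longrightarrow> within_dist G k u v \<Longrightarrow> v = u"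
  by (induction k arbitrary: v) auto

lemma within_dist_star_graph:
  assumes "u \<in> players n" "v \<in> players n" "c \<in> players n" "2 \<le> k"
  shows "within_dist (star_graph n c) k u v"
proof -
  have "within_dist (star_graph n c) 2 u v"
  proof (cases "u = v \<or> u = c \<or> v = c")
    case True
    then show ?thesis
      using assms by (auto simp: numeral_2_eq_2 star_graph_def)
  next
    case False
    then have "star_graph n c u c" "star_graph n c c v"
      using assms by (auto simp: star_graph_def)
    then show ?thesis
      by (auto simp: numeral_2_eq_2)
  qed
  then show ?thesis
    using assms(4) by (rule within_dist_mono)
qed

lemma star_graph_connected:
  assumes c: "c \<in> players n"
  shows "connected_graph n (star_graph n c)"
  unfolding connected_graph_def
proof (intro ballI)
  fix u v assume u: "u \<in> players n" and v: "v \<in> players n"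
  have "(star_graph n c)\<^sup>*\<^sup>* u c"
    by (cases "u = c") (auto simp: star_graph_def u c intro!: r_into_rtranclp)
  also have "(star_graph n c)\<^sup>*\<^sup>* c v"
    by (cases "v = c") (auto simp: star_graph_def v c intro!: r_into_rtranclp)
  finally show "(star_graph n c)\<^sup>*\<^sup>* u v" .
qed

lemma link_cost_le_player_cost:
  assumes "\<forall>u\<in>players n. 0 \<le> w u"
  shows "\<alpha> * real (card (S u)) \<le> player_cost n w \<alpha> \<beta> S u"
  using assms unfolding player_cost_def by (auto intro!: sum_nonneg)

lemma player_cost_no_links_le:
  assumes "u \<in> players n" "\<forall>u\<in>players n. 0 \<le> w u"
  shows "player_cost n w \<alpha> \<beta> (S(u := {})) u \<le> (\<Sum>v\<in>players n. w v) - w u"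
proof -
  have "player_cost n w \<alpha> \<beta> (S(u := {})) u =
      (\<Sum>v\<in>{v \<in> players n. \<not> within_dist (outcome_graph n (S(u := {}))) \<beta> u v}. w v)"
    unfolding player_cost_def by simp
  also have "\<dots> \<le> (\<Sum>v\<in>players n - {u}. w v)"
    using assms(2) within_dist_refl by (intro sum_mono2) auto
  finally show ?thesis
    using assms(1) by (simp add: sum_diff1)
qed

lemma player_cost_isolated:
  assumes "u \<in> players n" "\<And>y. \<not> outcome_graph n S u y"
  shows "player_cost n w \<alpha> \<beta> S u =
           \<alpha> * real (card (S u)) + ((\<Sum>v\<in>players n. w v) - w u)"
proof -
  have "{v \<in> players n. \<not> within_dist (outcome_graph n S) \<beta> u v} = players n - {u}"
    using within_dist_isolated[where G = "outcome_graph n S", OF assms(2)] within_dist_refl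
    by blast
  then show ?thesis
    using assms(1) unfolding player_cost_def by (simp add: sum_diff1)
qed

lemma nash_equilibrium_link_cost_le:
  assumes "nash_equilibrium n w \<alpha> \<beta> S" "x \<in> players n" "\<forall>u\<in>players n. 0 \<le> w u"
  shows "\<alpha> * real (card (S x)) \<le> (\<Sum>v\<in>players n. w v) - w x"
proof -
  have "\<alpha> * real (card (S x)) \<le> player_cost n w \<alpha> \<beta> S x"
    using assms(3) by (rule link_cost_le_player_cost)
  also have "\<dots> \<le> player_cost n w \<alpha> \<beta> (S(x := {})) x"
    using assms(1,2) unfolding nash_equilibrium_def by auto
  also have "\<dots> \<le> (\<Sum>v\<in>players n. w v) - w x"
    using assms(2,3) by (rule player_cost_no_links_le)
  finally show ?thesis .
qed

lemma star_graph_ne_graph: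
  assumes c: "c \<in> players n"
    and leaves: "\<forall>v\<in>players n - {c}. \<alpha> \<le> (\<Sum>v\<in>players n. w v) - w v"
    and w_nonneg: "\<forall>u\<in>players n. 0 \<le> w u"
    and alpha_pos: "\<alpha> > 0"
    and beta: "2 \<le> \<beta>"
  shows "ne_graph n w \<alpha> \<beta> (star_graph n c)"
proof -
  define S where "S = (\<lambda>v. if v \<in> players n - {c} then {c} else {})"
  have profile: "strategy_profile n S"
    unfolding strategy_profile_def S_def using c by auto
  have outcome: "outcome_graph n S = star_graph n c"
    by (intro ext) (auto simp: outcome_graph_def star_graph_def S_def)
  have cost: "player_cost n w \<alpha> \<beta> S u = \<alpha> * real (card (S u))" if "u \<in> players n" for u
  proof -
    have nobody_far: "{v \<in> players n. \<not> within_dist (outcome_graph n S) \<beta> u v} = {}"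
      using within_dist_star_graph[OF that _ c beta] unfolding outcome by blast
    show ?thesis
      unfolding player_cost_def nobody_far by simp
  qed
  have "player_cost n w \<alpha> \<beta> S u \<le> player_cost n w \<alpha> \<beta> (S(u := S')) u"
    if u: "u \<in> players n" and S': "S' \<subseteq> players n - {u}" for u S'
  proof (cases "u = c \<or> S' \<noteq> {}")
    case True
    have "finite S'"
      using S' finite_subset by fastforce
    then have "u \<noteq> c \<Longrightarrow> 1 \<le> card S'"
      using True by (simp add: Suc_leI card_gt_0_iff)
    then have "\<alpha> * real (card (S u)) \<le> \<alpha> * real (card S')"
      using alpha_pos by (auto simp: S_def)
    also have "\<dots> \<le> player_cost n w \<alpha> \<beta> (S(u := S')) u"
      using link_cost_le_player_cost[OF w_nonneg] by (metis fun_upd_same)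
    finally show ?thesis
      using cost[OF u] by simp
  next
    case False
    then have "\<And>y. \<not> outcome_graph n (S(u := S')) u y"
      by (auto simp: outcome_graph_def S_def)
    then show ?thesis
      using player_cost_isolated[OF u] cost[OF u] False leaves u by (simp add: S_def)
  qed
  then have "nash_equilibrium n w \<alpha> \<beta> S"
    unfolding nash_equilibrium_def using profile by blast
  then show ?thesis
    unfolding ne_graph_def using outcome by metis
qed

lemma outcome_graph_sinks_eq:
  assumes single: "\<And>x y z. x \<in> players n \<Longrightarrow> y \<in> S x \<Longrightarrow> z \<in> S x \<Longrightarrow> y = z"
    and path: "(outcome_graph n S)\<^sup>*\<^sup>* u v"
    and sinks: "S u = {}" "S v = {}"
  shows "u = v"
proof -
  define buys where "buys a b \<longleftrightarrow> a \<in> players n \<and> b \<in> S a" for a b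
  define sinks_of where "sinks_of x = {s. S s = {} \<and> buys\<^sup>*\<^sup>* x s}" for x
  have link: "sinks_of x = sinks_of y" if "x \<in> players n" "y \<in> S x" for x y
  proof (intro set_eqI iffI)
    fix s assume "s \<in> sinks_of x"
    then have "S s = {}" and "buys\<^sup>*\<^sup>* x s"
      by (auto simp: sinks_of_def)
    moreover have "x \<noteq> s"
      using that(2) \<open>S s = {}\<close> by auto
    ultimately obtain z where "buys x z" "buys\<^sup>*\<^sup>* z s"
      by (blast elim: converse_rtranclpE)
    then have "z \<in> S x" "buys\<^sup>*\<^sup>* z s"
      by (auto simp: buys_def)
    then show "s \<in> sinks_of y"
      using single[OF that] \<open>S s = {}\<close> by (auto simp: sinks_of_def)
  next
    fix s assume "s \<in> sinks_of y"
    then show "s \<in> sinks_of x"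
      using that by (auto simp: sinks_of_def buys_def intro: converse_rtranclp_into_rtranclp)
  qed
  have "sinks_of u = sinks_of v"
    using path
  proof (induction rule: rtranclp_induct)
    case (step b c)
    then show ?case
      using link by (metis outcome_graph_def)
  qed simp
  moreover have "sinks_of x = {x}" if "S x = {}" for x
    using that by (auto simp: sinks_of_def buys_def elim: converse_rtranclpE)
  ultimately show ?thesis
    using sinks by simp
qed

lemma connected_nash_equilibrium_card_le_1:
  assumes ne: "nash_equilibrium n w \<alpha> \<beta> S"
    and connected: "connected_graph n (outcome_graph n S)"
    and alpha_ge: "\<forall>u\<in>players n. w u \<le> \<alpha>"
    and w_nonneg: "\<forall>u\<in>players n. 0 \<le> w u"
    and alpha_pos: "\<alpha> > 0"
  shows "card {u \<in> players n. \<alpha> > (\<Sum>v\<in>players n. w v) - w u} \<le> 1"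
proof (rule ccontr)
  let ?W = "\<Sum>v\<in>players n. w v"
  let ?B = "{u \<in> players n. \<alpha> > ?W - w u}"
  assume "\<not> card ?B \<le> 1"
  then have "\<not> card ?B \<le> Suc 0"
    by (simp only: One_nat_def not_False_eq_True)
  moreover have "finite ?B"
    by (rule finite_subset[OF _ finite_players]) blast
  ultimately obtain u1 u2 where "u1 \<in> ?B" "u2 \<in> ?B" "u1 \<noteq> u2"
    using card_le_Suc0_iff_eq by blast
  then have u1: "u1 \<in> players n" "?W - w u1 < \<alpha>"
    and u2: "u2 \<in> players n" "?W - w u2 < \<alpha>"
    by auto
  have "strategy_profile n S"
    using ne by (simp add: nash_equilibrium_def)
  then have finite_links: "finite (S x)" if "x \<in> players n" for x
    using that finite_subset[of "S x" "players n"] unfolding strategy_profile_def by auto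
  have card_links: "card (S x) < k" if "x \<in> players n" "?W - w x < \<alpha> * real k" for x k
  proof -
    have "\<alpha> * real (card (S x)) < \<alpha> * real k"
      using nash_equilibrium_link_cost_le[OF ne that(1) w_nonneg] that(2) by (rule order.strict_trans1)
    then show ?thesis
      using alpha_pos by (simp only: mult_less_cancel_left_pos of_nat_less_iff)
  qed
  have no_links: "S u = {}" if "u \<in> players n" "?W - w u < \<alpha>" for u
  proof -
    have "card (S u) = 0"
      using card_links[of u 1] that by simp
    then show ?thesis
      using finite_links[OF that(1)] by simp
  qed
  have single_link: "y = z" if x: "x \<in> players n" and "y \<in> S x" "z \<in> S x" for x y z
  proof -
    have "w u1 \<le> \<alpha>" "0 \<le> w x"
      using alpha_ge w_nonneg u1 x by auto
    then have "?W - w x < \<alpha> + \<alpha>"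
      using u1 by linarith
    then have "card (S x) \<le> Suc 0"
      using card_links[OF x, of 2] by simp
    then show ?thesis
      using card_le_Suc0_iff_eq[OF finite_links[OF x]] that by blast
  qed
  have "(outcome_graph n S)\<^sup>*\<^sup>* u1 u2"
    using connected u1(1) u2(1) unfolding connected_graph_def by blast
  then have "u1 = u2"
    using outcome_graph_sinks_eq single_link no_links[OF u1] no_links[OF u2] by blast
  then show False
    using \<open>u1 \<noteq> u2\<close> by contradiction
qed

lemma star_centre_exists:
  fixes w :: "nat \<Rightarrow> real"
  assumes nonempty: "players n \<noteq> {}"
    and w_nonneg: "\<forall>u\<in>players n. 0 \<le> w u"
    and cond: "\<alpha> < Max (w ` players n) \<or>
                card {u \<in> players n. \<alpha> > (\<Sum>v\<in>players n. w v) - w u} \<le> 1"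
  shows "\<exists>c\<in>players n. \<forall>v\<in>players n - {c}. \<alpha> \<le> (\<Sum>v\<in>players n. w v) - w v"
  using cond
proof
  assume alpha_less: "\<alpha> < Max (w ` players n)"
  obtain m where m: "m \<in> players n" "w m = Max (w ` players n)"
    using Max_in[of "w ` players n"] nonempty by fastforce
  have "\<alpha> \<le> (\<Sum>v\<in>players n. w v) - w v" if v: "v \<in> players n - {m}" for v
  proof -
    have "w m \<le> (\<Sum>v\<in>players n - {v}. w v)"
      using m v w_nonneg by (intro member_le_sum[of m "players n - {v}" w]) auto
    then show ?thesis
      using v m alpha_less by (simp add: sum_diff1)
  qed
  then show ?thesis
    using m(1) by blast
next
  let ?B = "{u \<in> players n. \<alpha> > (\<Sum>v\<in>players n. w v) - w u}"
  assume "card ?B \<le> 1"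
  moreover have "finite ?B"
    by (rule finite_subset[OF _ finite_players]) blast
  ultimately have "?B \<subseteq> {b}" if "b \<in> ?B" for b
    using that card_le_Suc0_iff_eq[of ?B] by auto
  then obtain c where "c \<in> players n" "?B \<subseteq> {c}"
    using nonempty by (cases "?B = {}") auto
  then show ?thesis
    by (intro bexI[of _ c]) (auto simp: not_less)
qed

theorem corollary2:
  fixes n :: nat and w :: "nat \<Rightarrow> real" and \<alpha> :: real and \<beta> :: nat
  assumes w_pos: "\<forall>u\<in>players n. w u > 0"
    and alpha_pos: "\<alpha> > 0"
    and beta_ge: "1 \<le> \<beta>" and beta_le: "\<beta> \<le> n - 1"
    and beta_gt: "\<beta> > 1"
  shows "(star_celebrity_game n w \<alpha> \<beta> \<longleftrightarrow>
          (\<alpha> < Max (w ` players n) \<or>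
           (\<alpha> \<ge> Max (w ` players n) \<and>
            card {u \<in> players n. \<alpha> > (\<Sum>v\<in>players n. w v) - w u} \<le> 1)))
       \<and> (star_celebrity_game n w \<alpha> \<beta> \<longleftrightarrow>
          (\<exists>c\<in>players n. ne_graph n w \<alpha> \<beta> (star_graph n c)))"
proof -
  have nonempty: "players n \<noteq> {}"
    using beta_gt beta_le by (auto simp: players_def)
  have w_nonneg: "\<forall>u\<in>players n. 0 \<le> w u"
    using w_pos by (simp add: less_imp_le)
  have "\<alpha> < Max (w ` players n) \<or>
          card {u \<in> players n. \<alpha> > (\<Sum>v\<in>players n. w v) - w u} \<le> 1"
    if game: "star_celebrity_game n w \<alpha> \<beta>"
  proof -
    obtain S where "nash_equilibrium n w \<alpha> \<beta> S" "connected_graph n (outcome_graph n S)"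
      using game unfolding star_celebrity_game_def ne_graph_def by blast
    moreover have "\<forall>u\<in>players n. w u \<le> \<alpha>" if "\<not> \<alpha> < Max (w ` players n)"
    proof
      fix u assume "u \<in> players n"
      then have "w u \<le> Max (w ` players n)"
        by simp
      then show "w u \<le> \<alpha>"
        using that by linarith
    qed
    ultimately show ?thesis
      using connected_nash_equilibrium_card_le_1[OF _ _ _ w_nonneg alpha_pos] by blast
  qed
  moreover have "\<exists>c\<in>players n. ne_graph n w \<alpha> \<beta> (star_graph n c)"
    if "\<alpha> < Max (w ` players n) \<or>
          card {u \<in> players n. \<alpha> > (\<Sum>v\<in>players n. w v) - w u} \<le> 1"
    using star_centre_exists[OF nonempty w_nonneg that] star_graph_ne_graph[OF _ _ w_nonneg alpha_pos]
      beta_gt by (auto dest: Suc_leI simp: numeral_2_eq_2)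
  moreover have "star_celebrity_game n w \<alpha> \<beta>"
    if "\<exists>c\<in>players n. ne_graph n w \<alpha> \<beta> (star_graph n c)"
    using that star_graph_connected unfolding star_celebrity_game_def by blast
  ultimately show ?thesis
    by (auto simp: not_less)
qed

end
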